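(* Assume $\hat w=\sup_x w(x)<\infty$. Let $c(\lambda)=a+b\lambda$ with $a\ge0$, $b>0$, and define $h_1,h_2,h_3:[1,\infty)\to\mathbb{R}$ by $h_1(\lambda)=c'(\lambda)(1-\lambda^{-2})+2c(\lambda)\epsilon'(\lambda)$, $h_2(\lambda)=c'(\lambda)(1-\epsilon(\lambda)^2)+2c(\lambda)\epsilon'(\lambda)$, $h_3(\lambda)=c'(\lambda)(1-\epsilon_s(\lambda))+2c(\lambda)\epsilon'(\lambda)$. Then $h_3\le h_2\le h_1$, and for each $i\in\{1,2,3\}$, $\liminf_{\lambda\to\infty}h_i(\lambda)>0$ and $\limsup_{\lambda\to1+}h_i(\lambda)<0$.
   Context: Let $\pi,q$ be probability densities with respect to a $\sigma$-finite measure $\mu$ on $\mathbb{X}$, with $q>0$ wherever $\pi>0$; $\mathbb{S}=\{\pi>0\}$, $w=\pi/q$ on $\mathbb{S}$, $w=0$ elsewhere, $\pi(dx)=\pi(x)\mu(dx)$, $q(dx)=q(x)\mu(dx)$. For integer $N\ge1$ and $z_1\in\mathbb{S}$, the rejection probability is $\epsilon(N,z_1)=\int_{\mathbb{X}^{N-1}}\frac{w(z_1)}{\sum_{i=1}^Nw(z_i)}\prod_{n=2}^Nq(dz_n)$ and $\epsilon(N)=\int_{\mathbb{S}}\epsilon(N,z)\pi(dz)$. For real $\lambda\ge1$ with $\beta(\lambda)=\lfloor\lambda\rfloor+1-\lambda$: $\epsilon(\lambda)=\beta(\lambda)\epsilon(\lfloor\lambda\rfloor)+(1-\beta(\lambda))\epsilon(\lfloor\lambda\rfloor+1)$;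 $\epsilon'(\lambda)=\epsilon(\lfloor\lambda\rfloor+1)-\epsilon(\lfloor\lambda\rfloor)$ (the right-continuous extension of the derivative of $\epsilon$); and $\epsilon_s(\lambda)=\int_{\mathbb{S}\times\mathbb{X}^{\lfloor\lambda\rfloor}}\Big(\frac{\beta(\lambda)w(z_1)}{\sum_{i=1}^{\lfloor\lambda\rfloor}w(z_i)}+\frac{(1-\beta(\lambda))w(z_1)}{\sum_{j=1}^{\lfloor\lambda\rfloor+1}w(z_j)}\Big)^2\prod_{n=2}^{\lfloor\lambda\rfloor+1}q(dz_n)\,\pi(dz_1)$. *)

theory Defs
  imports "HOL-Probability.Probability"
begin

definition wgt :: "('a \<Rightarrow> real) \<Rightarrow> ('a \<Rightarrow> real) \<Rightarrow> 'a \<Rightarrow> real" where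
  "wgt p q x = (if p x > 0 then p x / q x else 0)"

definition supp :: "'a measure \<Rightarrow> ('a \<Rightarrow> real) \<Rightarrow> 'a set" where
  "supp M p = {x \<in> space M. p x > 0}"

definition eps_z :: "'a measure \<Rightarrow> ('a \<Rightarrow> real) \<Rightarrow> ('a \<Rightarrow> real) \<Rightarrow> nat \<Rightarrow> 'a \<Rightarrow> real" where
  "eps_z M p q N z1 =
     integral\<^sup>L (PiM {2..N} (\<lambda>_. density M (\<lambda>x. ennreal (q x))))
       (\<lambda>z. wgt p q z1 / (wgt p q z1 + (\<Sum>i\<in>{2..N}. wgt p q (z i))))"

definition eps_N :: "'a measure \<Rightarrow> ('a \<Rightarrow> real) \<Rightarrow> ('a \<Rightarrow> real) \<Rightarrow> nat \<Rightarrow> real" where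
  "eps_N M p q N = (LINT z:supp M p|density M (\<lambda>x. ennreal (p x)). eps_z M p q N z)"

definition beta :: "real \<Rightarrow> real" where
  "beta l = real_of_int \<lfloor>l\<rfloor> + 1 - l"

definition eps_lam :: "'a measure \<Rightarrow> ('a \<Rightarrow> real) \<Rightarrow> ('a \<Rightarrow> real) \<Rightarrow> real \<Rightarrow> real" where
  "eps_lam M p q l = beta l * eps_N M p q (nat \<lfloor>l\<rfloor>) + (1 - beta l) * eps_N M p q (nat \<lfloor>l\<rfloor> + 1)"

text \<open>right-continuous extension of the derivative of epsilon(lambda)\<close>
definition eps_deriv :: "'a measure \<Rightarrow> ('a \<Rightarrow> real) \<Rightarrow> ('a \<Rightarrow> real) \<Rightarrow> real \<Rightarrow> real" where
  "eps_deriv M p q l = eps_N M p q (nat \<lfloor>l\<rfloor> + 1) - eps_N M p q (nat \<lfloor>l\<rfloor>)"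

definition eps_s :: "'a measure \<Rightarrow> ('a \<Rightarrow> real) \<Rightarrow> ('a \<Rightarrow> real) \<Rightarrow> real \<Rightarrow> real" where
  "eps_s M p q l =
     integral\<^sup>L (PiM {1..nat \<lfloor>l\<rfloor> + 1}
        (\<lambda>i. if i = 1 then density M (\<lambda>x. ennreal (p x)) else density M (\<lambda>x. ennreal (q x))))
       (\<lambda>z. indicator (supp M p) (z 1) *
          (beta l * wgt p q (z 1) / (\<Sum>i\<in>{1..nat \<lfloor>l\<rfloor>}. wgt p q (z i))
           + (1 - beta l) * wgt p q (z 1) / (\<Sum>j\<in>{1..nat \<lfloor>l\<rfloor> + 1}. wgt p q (z j)))\<^sup>2)"

end

(*
  Write w_1 = w(z_1), ..., w_K = w(z_K) for a first sample z_1 ~ pi and further samples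
  z_2, z_3, ... ~ q, all independent. On this product space epsilon(K) is the mean of the share
  w_1 / (w_1 + ... + w_K) (restricted to z_1 in S), epsilon(lambda) is the mean of the interpolated
  share X = beta * share_N + (1 - beta) * share_(N+1), and epsilon_s(lambda) is the mean of X^2.
  Hence epsilon(lambda)^2 <= epsilon_s(lambda) by Jensen, which gives h3 <= h2. Two tangent-line
  (convexity) bounds, using E_q w = 1, give epsilon(N) >= 1/N, and convexity of 1/x then gives
  epsilon(lambda) >= 1/lambda, i.e. h2 <= h1.

  For large lambda, Hoeffding's inequality shows that w_2 + ... + w_N >= (N - 1)/2 outside an
  event of probability exp (-(N - 1)/(2 W^2)), where W = max 1 (sup w); off that event the share
  of z_1 is at most 2W/(N - 1). So epsilon_s(lambda) and epsilon(N) - epsilon(N+1) are O(1/N^2),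
  while the factor c(lambda) in front of epsilon'(lambda) grows only linearly; hence h3, and with
  it h2 and h1, is eventually >= b/2. Near lambda = 1 we have epsilon(1) = 1 and
  epsilon(2) <= 1 - 1/(2W), so epsilon' <= -1/(2W) on [1, 2) while 1 - lambda^-2 -> 0; hence h1,
  and with it h2 and h3, is eventually <= -b/(2W).
*)

theory Submission
  imports Defs "HOL-Real_Asymp.Real_Asymp"
begin

lemma divide_add_ge_tangent:
  fixes c m r :: real
  assumes "0 < c" "0 \<le> m" "0 \<le> r"
  shows "c / (c + m) - c / (c + m)\<^sup>2 * (r - m) \<le> c / (c + r)"
proof -
  have "c / (c + r) - (c / (c + m) - c / (c + m)\<^sup>2 * (r - m)) = c * (r - m)\<^sup>2 / ((c + r) * (c + m)\<^sup>2)"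
    using assms by (simp add: divide_simps power2_eq_square) algebra
  also have "\<dots> \<ge> 0"
    using assms by simp
  finally show ?thesis
    by simp
qed

lemma square_div_add_ge_tangent:
  fixes m x :: real
  assumes "0 \<le> m" "0 \<le> x"
  shows "1 / (1 + m) + (1 + 2 * m) / (1 + m)\<^sup>2 * (x - 1) \<le> x\<^sup>2 / (x + m)"
proof (cases "x + m = 0")
  case True
  with assms have "x = 0" "m = 0"
    by auto
  then show ?thesis
    by simp
next
  case False
  with assms have "x\<^sup>2 / (x + m) - (1 / (1 + m) + (1 + 2 * m) / (1 + m)\<^sup>2 * (x - 1))
      = m\<^sup>2 * (x - 1)\<^sup>2 / ((1 + m)\<^sup>2 * (x + m))"
    by (simp add: divide_simps power2_eq_square) (simp add: algebra_simps)
  also have "\<dots> \<ge> 0"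
    using assms by simp
  finally show ?thesis
    by simp
qed

lemma inverse_le_interpolation:
  fixes n \<beta> :: real
  assumes "0 < n" "0 \<le> \<beta>" "\<beta> \<le> 1"
  shows "1 / (n + 1 - \<beta>) \<le> \<beta> / n + (1 - \<beta>) / (n + 1)"
proof -
  have "n * (n + 1) \<le> (n + \<beta>) * (n + 1 - \<beta>)"
    using assms by (simp add: algebra_simps mult_left_le)
  with assms have "1 / (n + 1 - \<beta>) \<le> (n + \<beta>) / (n * (n + 1))"
    by (simp add: divide_simps)
  also have "\<dots> = \<beta> / n + (1 - \<beta>) / (n + 1)"
    using assms by (simp add: field_simps)
  finally show ?thesis .
qed

lemma frac_add_le:
  fixes a r W :: real
  assumes "0 \<le> a" "a \<le> W" "0 < r"
  shows "a / (a + r) \<le> W / r"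
  using assms by (intro frac_le) auto

lemma frac_add_diff_le:
  fixes a r t W :: real
  assumes "0 \<le> a" "a \<le> W" "0 < r" "0 \<le> t" "t \<le> W"
  shows "a / (a + r) - a / (a + r + t) \<le> (W / r)\<^sup>2"
proof -
  have "a / (a + r) - a / (a + r + t) = a * t / ((a + r) * (a + r + t))"
    using assms by (simp add: field_simps)
  also have "\<dots> \<le> (W * W) / (r * r)"
    using assms by (intro frac_le mult_mono) auto
  finally show ?thesis
    by (simp add: power_divide power2_eq_square)
qed

lemma (in prob_space) expectation_le_prob_add:
  fixes f :: "'a \<Rightarrow> real"
  assumes E: "E \<in> events" and "0 \<le> c"
    and f: "\<And>x. x \<in> space M \<Longrightarrow> f x \<le> indicator E x + c"
  shows "expectation f \<le> prob E + c"
proof -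
  have int_E: "integrable M (indicator E :: 'a \<Rightarrow> real)"
    using E by (intro integrable_real_indicator) (simp_all add: less_top[symmetric])
  have "expectation f \<le> expectation (\<lambda>x. indicator E x + c)"
    using int_E f \<open>0 \<le> c\<close> by (intro integral_mono') auto
  also have "\<dots> = prob E + c"
    using int_E E by (simp add: prob_space)
  finally show ?thesis .
qed

lemma (in product_prob_space) integral_PiM_restrict:
  fixes f :: "_ \<Rightarrow> real"
  assumes "J \<subseteq> K" "finite K" "f \<in> borel_measurable (PiM J M)"
  shows "(\<integral>x. f (restrict x J) \<partial>PiM K M) = integral\<^sup>L (PiM J M) f"
  using assms by (subst distr_restrict[OF assms(1,2)]) (simp add: integral_distr measurable_restrict_subset)

lemma (in product_prob_space) integral_PiM_insert:
  fixes f :: "_ \<Rightarrow> real"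
  assumes f: "integrable (PiM (insert i J) M) f"
  shows "integral\<^sup>L (PiM (insert i J) M) f = (\<integral>x. (\<integral>y. f (y(i := x)) \<partial>PiM J M) \<partial>M i)"
proof -
  let ?D = "M i \<Otimes>\<^sub>M PiM J M" and ?g = "\<lambda>(x, y). y(i := x)"
  interpret J: prob_space "PiM J M"
    by (intro prob_space_PiM prob_space)
  interpret pair_sigma_finite "M i" "PiM J M"
    by unfold_locales
  have g: "?g \<in> measurable ?D (PiM (insert i J) M)"
    by measurable
  have D: "distr ?D (PiM (insert i J) M) ?g = PiM (insert i J) M"
    by (intro distr_pair_PiM_eq_PiM prob_space)
  have "integrable ?D (\<lambda>z. f (?g z))"
    using f by (subst integrable_distr_eq[OF g, symmetric]) (auto simp: D)
  then have "(\<integral>z. f (?g z) \<partial>?D) = (\<integral>x. (\<integral>y. f (y(i := x)) \<partial>PiM J M) \<partial>M i)"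
    by (subst integral_fst'[symmetric]) (auto simp: case_prod_beta)
  moreover have "integral\<^sup>L (PiM (insert i J) M) f = (\<integral>z. f (?g z) \<partial>?D)"
    using f by (subst D[symmetric]) (simp add: integral_distr[OF g])
  ultimately show ?thesis
    by simp
qed

lemma (in product_prob_space) indep_vars_PiM_components:
  assumes "J \<subseteq> K" "finite K" "J \<noteq> {}"
  shows "prob_space.indep_vars (PiM K M) M (\<lambda>i x. x i) J"
proof -
  interpret K: prob_space "PiM K M"
    by (intro prob_space_PiM prob_space)
  show ?thesis
  proof (subst K.indep_vars_iff_distr_eq_PiM')
    show "K.random_variable (M i) (\<lambda>x. x i)" if "i \<in> J" for i
      using that assms by (intro measurable_component_singleton) auto
    have "PiM J (\<lambda>i. distr (PiM K M) (M i) (\<lambda>x. x i)) = PiM J M"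
      using assms by (intro PiM_cong) (auto intro!: distr_PiM_component prob_space)
    then show "distr (PiM K M) (PiM J M) (\<lambda>x. restrict x J) = PiM J (\<lambda>i. distr (PiM K M) (M i) (\<lambda>x. x i))"
      using distr_restrict[OF assms(1,2)] by simp
  qed fact
qed

lemma (in product_prob_space) integral_PiM_component:
  fixes f :: "_ \<Rightarrow> real"
  assumes "i \<in> K" "f \<in> borel_measurable (M i)"
  shows "(\<integral>x. f (x i) \<partial>PiM K M) = integral\<^sup>L (M i) f"
  using assms by (subst distr_PiM_component[symmetric, of K M i]) (auto simp: integral_distr prob_space)

lemma (in product_prob_space) Hoeffding_ineq_le_PiM:
  fixes f :: "'a \<Rightarrow> real" and a b \<epsilon> :: real
  assumes "J \<subseteq> K" "finite K" "J \<noteq> {}" "a < b" "0 \<le> \<epsilon>"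
    and f: "\<And>i. i \<in> J \<Longrightarrow> f \<in> borel_measurable (M i)"
    and f_range: "\<And>i x. i \<in> J \<Longrightarrow> x \<in> space (M i) \<Longrightarrow> f x \<in> {a..b}"
  shows "measure (PiM K M) {x \<in> space (PiM K M). (\<Sum>i\<in>J. f (x i)) \<le> (\<Sum>i\<in>J. integral\<^sup>L (M i) f) - \<epsilon>}
    \<le> exp (-2 * \<epsilon>\<^sup>2 / (card J * (b - a)\<^sup>2))"
proof -
  interpret K: prob_space "PiM K M"
    by (intro prob_space_PiM prob_space)
  have fin: "finite J"
    using assms finite_subset by blast
  interpret Hoeffding_ineq "PiM K M" J "\<lambda>i x. f (x i)" "\<lambda>_. a" "\<lambda>_. b" "\<Sum>i\<in>J. integral\<^sup>L (M i) f"
  proof unfold_locales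
    show "K.indep_vars (\<lambda>_. borel) (\<lambda>i x. f (x i)) J"
      using indep_vars_PiM_components[OF assms(1-3)] f by (rule K.indep_vars_compose2)
    show "AE x in PiM K M. f (x i) \<in> {a..b}" if "i \<in> J" for i
      using that assms by (intro AE_I2 f_range) (auto simp: space_PiM)
    show "(\<Sum>i\<in>J. integral\<^sup>L (M i) f) \<equiv> \<Sum>i\<in>J. K.expectation (\<lambda>x. f (x i))"
      using assms by (simp add: integral_PiM_component subsetD)
  qed (fact fin)
  have "(\<Sum>i\<in>J. (b - a)\<^sup>2) = card J * (b - a)\<^sup>2"
    by simp
  moreover have "(\<Sum>i\<in>J. (b - a)\<^sup>2) > 0"
    using assms fin by (intro sum_pos) auto
  ultimately show ?thesis
    using Hoeffding_ineq_le[OF \<open>0 \<le> \<epsilon>\<close>] by simp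
qed

lemma Liminf_pos_if_eventually_ge:
  fixes f :: "'a \<Rightarrow> real"
  assumes "0 < c" "eventually (\<lambda>x. c \<le> f x) F"
  shows "0 < Liminf F (\<lambda>x. ereal (f x))"
proof -
  have "ereal c \<le> Liminf F (\<lambda>x. ereal (f x))"
    using assms(2) by (intro Liminf_bounded) simp
  moreover have "0 < ereal c"
    using assms(1) by simp
  ultimately show ?thesis
    by (rule order.strict_trans2[rotated])
qed

lemma Limsup_neg_if_eventually_le:
  fixes f :: "'a \<Rightarrow> real"
  assumes "c < 0" "eventually (\<lambda>x. f x \<le> c) F"
  shows "Limsup F (\<lambda>x. ereal (f x)) < 0"
proof -
  have "Limsup F (\<lambda>x. ereal (f x)) \<le> ereal c"
    using assms(2) by (intro Limsup_bounded) simp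
  moreover have "ereal c < 0"
    using assms(1) by simp
  ultimately show ?thesis
    by (rule order.strict_trans1)
qed

lemma sum_from_1_split:
  fixes f :: "nat \<Rightarrow> 'a::comm_monoid_add"
  assumes "1 \<le> N"
  shows "(\<Sum>i\<in>{1..N}. f i) = f 1 + (\<Sum>i\<in>{2..N}. f i)"
  using assms by (subst sum.atLeast_Suc_atMost) (simp_all add: numeral_2_eq_2)

lemma beta_bounds: "0 < beta l" "beta l \<le> 1"
  unfolding beta_def by linarith+

lemma tendsto_affine_times_tail:
  fixes a b W :: real
  assumes "0 < W"
  shows "((\<lambda>x. (b + 2 * a + 2 * b * (x + 1)) * (exp (- (x - 1) / (2 * W\<^sup>2)) + (2 * W / (x - 1))\<^sup>2))
    \<longlongrightarrow> 0) at_top"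
  using assms by real_asymp

lemma (in finite_measure) integrable_bounded:
  fixes f :: "'a \<Rightarrow> real"
  assumes "f \<in> borel_measurable M" "\<And>x. x \<in> space M \<Longrightarrow> \<bar>f x\<bar> \<le> B"
  shows "integrable M f"
  using assms by (intro integrable_const_bound[where B=B] AE_I2) auto

locale importance_sampling =
  fixes M :: "'a measure" and p q :: "'a \<Rightarrow> real"
  assumes p_measurable [measurable]: "p \<in> borel_measurable M"
    and q_measurable [measurable]: "q \<in> borel_measurable M"
    and p_nonneg: "\<And>x. x \<in> space M \<Longrightarrow> p x \<ge> 0"
    and q_nonneg: "\<And>x. x \<in> space M \<Longrightarrow> q x \<ge> 0"
    and p_normalized: "(\<integral>\<^sup>+ x. ennreal (p x) \<partial>M) = 1"
    and q_normalized: "(\<integral>\<^sup>+ x. ennreal (q x) \<partial>M) = 1"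
    and q_pos_if_p_pos: "\<And>x. x \<in> space M \<Longrightarrow> p x > 0 \<Longrightarrow> q x > 0"
    and weight_bounded: "bdd_above (wgt p q ` space M)"
begin

abbreviation "P \<equiv> density M (\<lambda>x. ennreal (p x))"
abbreviation "Q \<equiv> density M (\<lambda>x. ennreal (q x))"
abbreviation "w \<equiv> wgt p q"
abbreviation "S \<equiv> supp M p"

definition PQ :: "nat \<Rightarrow> 'a measure" where
  "PQ i = (if i = 1 then P else Q)"

definition "W = max 1 (SUP x\<in>space M. w x)"

sublocale P: prob_space P
  by (rule prob_spaceI) (simp add: emeasure_density p_normalized)

sublocale Q: prob_space Q
  by (rule prob_spaceI) (simp add: emeasure_density q_normalized)

(* Stated with Suc 0 because the simplifier rewrites 1 :: nat to Suc 0 before matching. *)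
lemma PQ_1 [simp]: "PQ (Suc 0) = P"
  and PQ_not_1 [simp]: "i \<noteq> 1 \<Longrightarrow> PQ i = Q"
  by (simp_all add: PQ_def)

lemma sets_PQ [simp, measurable_cong]: "sets (PQ i) = sets M"
  and space_PQ [simp]: "space (PQ i) = space M"
  by (simp_all add: PQ_def)

lemma product_prob_space_PQ: "product_prob_space PQ"
  unfolding product_prob_space_def product_prob_space_axioms_def product_sigma_finite_def
  by (auto simp: PQ_def intro: prob_space_imp_sigma_finite P.prob_space_axioms Q.prob_space_axioms)

lemma prob_space_PiM_PQ: "prob_space (PiM I PQ)"
  by (intro prob_space_PiM) (auto simp: PQ_def intro: P.prob_space_axioms Q.prob_space_axioms)

lemma w_measurable [measurable]: "w \<in> borel_measurable M"
  unfolding wgt_def[abs_def] by measurable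

lemma supp_measurable [measurable]: "S \<in> sets M"
  unfolding supp_def by measurable

lemma w_nonneg: "x \<in> space M \<Longrightarrow> 0 \<le> w x"
  using p_nonneg q_nonneg by (auto simp: wgt_def)

lemma w_le_W: "x \<in> space M \<Longrightarrow> w x \<le> W"
  unfolding W_def using weight_bounded by (auto intro: cSUP_upper2 max.coboundedI2)

lemma W_ge_1: "1 \<le> W"
  by (simp add: W_def)

lemma supp_iff_w_pos: "x \<in> S \<longleftrightarrow> x \<in> space M \<and> 0 < w x"
  using q_pos_if_p_pos q_nonneg by (auto simp: supp_def wgt_def)

lemma space_PiM_PQ: "z \<in> space (PiM I PQ) \<Longrightarrow> i \<in> I \<Longrightarrow> z i \<in> space M"
  by (auto simp: space_PiM)

lemma component_measurable [measurable (raw)]: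
  "i \<in> I \<Longrightarrow> (\<lambda>z. z i) \<in> measurable (PiM I PQ) M"
proof -
  assume "i \<in> I"
  then have "(\<lambda>z. z i) \<in> measurable (PiM I PQ) (PQ i)"
    by (rule measurable_component_singleton)
  moreover have "measurable (PiM I PQ) (PQ i) = measurable (PiM I PQ) M"
    by (rule measurable_cong_sets) auto
  ultimately show ?thesis
    by simp
qed

lemma PiM_Q_eq_PQ: "1 \<notin> J \<Longrightarrow> PiM J (\<lambda>_. Q) = PiM J PQ"
  by (rule PiM_cong) (auto simp: PQ_def)

lemma PiM_if_eq_PQ: "PiM I (\<lambda>i. if i = 1 then P else Q) = PiM I PQ"
  unfolding PQ_def[abs_def] ..

lemma P_eq_density_Q: "P = density Q w"
proof -
  have "density Q w = density M (\<lambda>x. ennreal (q x) * ennreal (w x))"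
    by (rule density_density_eq) auto
  also have "\<dots> = P"
  proof (rule density_cong)
    show "AE x in M. ennreal (q x) * ennreal (w x) = ennreal (p x)"
    proof (rule AE_I2)
      fix x assume x: "x \<in> space M"
      show "ennreal (q x) * ennreal (w x) = ennreal (p x)"
        using p_nonneg[OF x] q_nonneg[OF x] q_pos_if_p_pos[OF x]
        by (cases "p x > 0") (auto simp: wgt_def ennreal_mult'[symmetric])
    qed
  qed auto
  finally show ?thesis
    by simp
qed

lemma integral_P: "f \<in> borel_measurable M \<Longrightarrow> integral\<^sup>L P f = (\<integral>x. w x * f x \<partial>Q)"
  by (subst P_eq_density_Q, subst integral_density) (auto simp: w_nonneg)

lemma integral_w_Q: "(\<integral>x. w x \<partial>Q) = 1"
  using integral_P[of "\<lambda>_. 1"] P.prob_space by simp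

lemma AE_P_supp: "AE x in P. x \<in> S"
  by (subst AE_density) (auto simp: supp_def)

lemma integrable_w_component:
  assumes "i \<in> K"
  shows "integrable (PiM K PQ) (\<lambda>z. w (z i))"
proof -
  interpret K: prob_space "PiM K PQ"
    by (rule prob_space_PiM_PQ)
  have "\<bar>w (z i)\<bar> \<le> W" if "z \<in> space (PiM K PQ)" for z
    using space_PiM_PQ[OF that assms] w_nonneg w_le_W by simp
  with assms show ?thesis
    by (intro K.integrable_bounded) measurable
qed

lemma integral_sum_w:
  assumes "J \<subseteq> K" "finite J" "1 \<notin> J"
  shows "(\<integral>z. (\<Sum>i\<in>J. w (z i)) \<partial>PiM K PQ) = card J"
proof -
  have "(\<integral>z. (\<Sum>i\<in>J. w (z i)) \<partial>PiM K PQ) = (\<Sum>i\<in>J. \<integral>z. w (z i) \<partial>PiM K PQ)"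
    using assms by (intro Bochner_Integration.integral_sum integrable_w_component) auto
  also have "\<dots> = (\<Sum>i\<in>J. 1)"
  proof (rule sum.cong[OF refl])
    fix i assume i: "i \<in> J"
    with assms have "i \<in> K" "i \<noteq> 1"
      by auto
    then have "(\<integral>z. w (z i) \<partial>PiM K PQ) = integral\<^sup>L Q w"
      by (subst product_prob_space.integral_PiM_component[OF product_prob_space_PQ]) simp_all
    then show "(\<integral>z. w (z i) \<partial>PiM K PQ) = 1"
      by (simp only: integral_w_Q)
  qed
  finally show ?thesis
    by simp
qed

lemma eps_z_eq: "eps_z M p q N x = (\<integral>y. w x / (w x + (\<Sum>i\<in>{2..N}. w (y i))) \<partial>PiM {2..N} PQ)"
  unfolding eps_z_def by (simp add: PiM_Q_eq_PQ)

lemma eps_z_measurable [measurable]: "eps_z M p q N \<in> borel_measurable M"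
  unfolding eps_z_def
proof (rule sigma_finite_measure.borel_measurable_lebesgue_integral)
  show "sigma_finite_measure (PiM {2..N} (\<lambda>_. Q))"
    by (intro prob_space_imp_sigma_finite prob_space_PiM Q.prob_space_axioms)
qed measurable

lemma eps_z_bounds:
  assumes "x \<in> space M"
  shows "0 \<le> eps_z M p q N x" "eps_z M p q N x \<le> 1"
proof -
  interpret Y: prob_space "PiM {2..N} PQ"
    by (rule prob_space_PiM_PQ)
  let ?f = "\<lambda>y. w x / (w x + (\<Sum>i\<in>{2..N}. w (y i)))"
  have f_bounds: "0 \<le> ?f y \<and> ?f y \<le> 1" if "y \<in> space (PiM {2..N} PQ)" for y
  proof -
    have "0 \<le> (\<Sum>i\<in>{2..N}. w (y i))"
      using that by (intro sum_nonneg w_nonneg space_PiM_PQ) auto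
    with w_nonneg[OF assms] show ?thesis
      by (auto simp: divide_le_eq_1)
  qed
  show "0 \<le> eps_z M p q N x"
    unfolding eps_z_eq using f_bounds by (intro integral_nonneg_AE AE_I2) auto
  have "integrable (PiM {2..N} PQ) ?f"
    using f_bounds by (intro Y.integrable_bounded[where B=1]) (measurable, auto simp del: abs_divide)
  then have "eps_z M p q N x \<le> (\<integral>y. 1 \<partial>PiM {2..N} PQ)"
    unfolding eps_z_eq using f_bounds by (intro integral_mono Y.integrable_const) auto
  then show "eps_z M p q N x \<le> 1"
    using Y.prob_space by simp
qed

(* Jensen: R \<mapsto> c / (c + R) is convex and the sum R of the other weights has mean N - 1. *)
lemma eps_z_ge:
  assumes "x \<in> S"
  shows "w x / (w x + real (N - 1)) \<le> eps_z M p q N x"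
proof -
  interpret Y: prob_space "PiM {2..N} PQ"
    by (rule prob_space_PiM_PQ)
  define c m where "c = w x" and "m = real (N - 1)"
  define R where "R y = (\<Sum>i\<in>{2..N}. w (y i))" for y
  have "0 < c" "0 \<le> m"
    using assms by (auto simp: c_def m_def supp_iff_w_pos)
  have R_nonneg: "0 \<le> R y" if "y \<in> space (PiM {2..N} PQ)" for y
    unfolding R_def using that by (intro sum_nonneg w_nonneg space_PiM_PQ) auto
  have int_R: "integrable (PiM {2..N} PQ) R"
    unfolding R_def by (intro Bochner_Integration.integrable_sum integrable_w_component) auto
  have "integral\<^sup>L (PiM {2..N} PQ) R = m"
    unfolding R_def m_def by (subst integral_sum_w) auto
  moreover have int_affine: "integrable (PiM {2..N} PQ) (\<lambda>y. c / (c + m)\<^sup>2 * (R y - m))"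
    using int_R by (intro integrable_mult_right Bochner_Integration.integrable_diff Y.integrable_const)
  ultimately have "c / (c + m) = (\<integral>y. c / (c + m) - c / (c + m)\<^sup>2 * (R y - m) \<partial>PiM {2..N} PQ)"
    by (subst Bochner_Integration.integral_diff[OF Y.integrable_const int_affine],
        subst integral_mult_right_zero, subst Bochner_Integration.integral_diff[OF int_R Y.integrable_const])
      (use Y.prob_space in simp)
  also have "\<dots> \<le> (\<integral>y. c / (c + R y) \<partial>PiM {2..N} PQ)"
  proof (rule integral_mono)
    show "integrable (PiM {2..N} PQ) (\<lambda>y. c / (c + m) - c / (c + m)\<^sup>2 * (R y - m))"
      using int_affine by (intro Bochner_Integration.integrable_diff Y.integrable_const)
    have "(\<lambda>y. c / (c + R y)) \<in> borel_measurable (PiM {2..N} PQ)"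
      unfolding R_def by measurable
    moreover have "\<bar>c / (c + R y)\<bar> \<le> 1" if "y \<in> space (PiM {2..N} PQ)" for y
      using \<open>0 < c\<close> R_nonneg[OF that] by simp
    ultimately show "integrable (PiM {2..N} PQ) (\<lambda>y. c / (c + R y))"
      by (rule Y.integrable_bounded)
    show "c / (c + m) - c / (c + m)\<^sup>2 * (R y - m) \<le> c / (c + R y)"
      if "y \<in> space (PiM {2..N} PQ)" for y
      using \<open>0 < c\<close> \<open>0 \<le> m\<close> R_nonneg[OF that] by (rule divide_add_ge_tangent)
  qed
  also have "\<dots> = eps_z M p q N x"
    by (simp add: eps_z_eq R_def c_def)
  finally show ?thesis
    by (simp add: c_def m_def)
qed

lemma eps_N_eq_integral: "eps_N M p q N = integral\<^sup>L P (eps_z M p q N)"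
  unfolding eps_N_def set_lebesgue_integral_def
  using AE_P_supp by (intro integral_cong_AE) auto

lemma integrable_eps_z: "integrable P (eps_z M p q N)"
  using eps_z_bounds by (intro P.integrable_bounded[where B=1]) auto

(* Change of measure to q turns the integrand into the convex function w\<^sup>2 / (w + m), and w has q-mean 1. *)
lemma inverse_le_integral_w_frac:
  assumes "0 \<le> m"
  shows "1 / (1 + m) \<le> (\<integral>x. w x / (w x + m) \<partial>P)"
proof -
  define g where "g x = 1 / (1 + m) + (1 + 2 * m) / (1 + m)\<^sup>2 * (w x - 1)" for x
  have w_bounds: "\<bar>w x\<bar> \<le> W" "0 \<le> w x / (w x + m)" "w x / (w x + m) \<le> 1" if "x \<in> space M" for x
    using w_nonneg[OF that] w_le_W[OF that] assms by (auto simp: divide_le_eq_1)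
  have int_w: "integrable Q w"
    using w_bounds by (intro Q.integrable_bounded) auto
  have "1 / (1 + m) = (\<integral>x. g x \<partial>Q)"
    using int_w Q.prob_space by (simp add: g_def integral_w_Q)
  also have "\<dots> \<le> (\<integral>x. (w x)\<^sup>2 / (w x + m) \<partial>Q)"
  proof (rule integral_mono)
    show "integrable Q g"
      using int_w by (simp add: g_def[abs_def])
    have "\<bar>(w x)\<^sup>2 / (w x + m)\<bar> \<le> W" if "x \<in> space M" for x
    proof -
      have "(w x)\<^sup>2 / (w x + m) = w x * (w x / (w x + m))"
        by (simp add: power2_eq_square)
      also have "\<dots> \<le> w x"
        using w_bounds[OF that] w_nonneg[OF that] by (intro mult_right_le_one_le)
      finally show ?thesis
        using w_bounds[OF that] w_nonneg[OF that] assms by simp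
    qed
    then show "integrable Q (\<lambda>x. (w x)\<^sup>2 / (w x + m))"
      by (intro Q.integrable_bounded) auto
    show "g x \<le> (w x)\<^sup>2 / (w x + m)" if "x \<in> space Q" for x
      unfolding g_def using assms w_nonneg that by (intro square_div_add_ge_tangent) auto
  qed
  also have "\<dots> = (\<integral>x. w x / (w x + m) \<partial>P)"
    by (simp add: integral_P power2_eq_square)
  finally show ?thesis .
qed

lemma eps_N_ge_inverse:
  assumes "1 \<le> N"
  shows "1 / real N \<le> eps_N M p q N"
proof -
  define m where "m = real (N - 1)"
  have "1 / real N = 1 / (1 + m)"
    using assms by (simp add: m_def of_nat_diff)
  also have "\<dots> \<le> (\<integral>x. w x / (w x + m) \<partial>P)"
    by (rule inverse_le_integral_w_frac) (simp add: m_def)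
  also have "\<dots> \<le> integral\<^sup>L P (eps_z M p q N)"
  proof (rule integral_mono_AE)
    have "\<bar>w x / (w x + m)\<bar> \<le> 1" if "x \<in> space M" for x
      using w_nonneg[OF that] by (auto simp: m_def divide_le_eq_1)
    then show "integrable P (\<lambda>x. w x / (w x + m))"
      by (intro P.integrable_bounded) auto
    show "AE x in P. w x / (w x + m) \<le> eps_z M p q N x"
      using AE_P_supp by eventually_elim (unfold m_def, rule eps_z_ge)
  qed (rule integrable_eps_z)
  finally show ?thesis
    by (simp add: eps_N_eq_integral)
qed

lemma eps_N_1: "eps_N M p q 1 = 1"
proof -
  have "AE x in P. eps_z M p q 1 x = 1"
    using AE_P_supp by eventually_elim
      (use prob_space.prob_space[OF prob_space_PiM_PQ, of "{}"] in \<open>simp add: eps_z_eq supp_iff_w_pos\<close>)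
  then have "integral\<^sup>L P (eps_z M p q 1) = (\<integral>x. 1 \<partial>P)"
    by (intro integral_cong_AE) auto
  then show ?thesis
    using P.prob_space by (simp add: eps_N_eq_integral)
qed

lemma eps_z_2_le:
  assumes "x \<in> S"
  shows "eps_z M p q 2 x \<le> 1 - 1 / (2 * W)"
proof -
  interpret Y: prob_space "PiM {2} PQ"
    by (rule prob_space_PiM_PQ)
  have x: "0 < w x" "w x \<le> W"
    using assms w_le_W by (auto simp: supp_iff_w_pos)
  have int_w2: "integrable (PiM {2} PQ) (\<lambda>y. w (y 2))"
    by (rule integrable_w_component) simp
  have "eps_z M p q 2 x = (\<integral>y. w x / (w x + w (y 2)) \<partial>PiM {2} PQ)"
    by (simp add: eps_z_eq)
  also have "\<dots> \<le> (\<integral>y. 1 - w (y 2) / (2 * W) \<partial>PiM {2} PQ)"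
  proof (rule integral_mono)
    show "integrable (PiM {2} PQ) (\<lambda>y. 1 - w (y 2) / (2 * W))"
      using int_w2 by (intro Bochner_Integration.integrable_diff Y.integrable_const integrable_divide)
    have "\<bar>w x / (w x + w (y 2))\<bar> \<le> 1" if "y \<in> space (PiM {2} PQ)" for y
      using x w_nonneg[OF space_PiM_PQ[OF that]] by simp
    then show "integrable (PiM {2} PQ) (\<lambda>y. w x / (w x + w (y 2)))"
      by (intro Y.integrable_bounded) (measurable, auto)
    show "w x / (w x + w (y 2)) \<le> 1 - w (y 2) / (2 * W)" if "y \<in> space (PiM {2} PQ)" for y
    proof -
      have t: "0 \<le> w (y 2)" "w (y 2) \<le> W"
        using w_nonneg w_le_W space_PiM_PQ[OF that] by auto
      then have "w (y 2) / (2 * W) \<le> w (y 2) / (w x + w (y 2))"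
        using x by (intro divide_left_mono) auto
      also have "\<dots> = 1 - w x / (w x + w (y 2))"
        using t x by (simp add: field_simps)
      finally show ?thesis
        by simp
    qed
  qed
  also have "\<dots> = 1 - 1 / (2 * W)"
    using int_w2 integral_sum_w[of "{2}" "{2}"] Y.prob_space
    by (simp add: Bochner_Integration.integral_diff[OF Y.integrable_const integrable_divide])
  finally show ?thesis .
qed

lemma eps_N_2_le: "eps_N M p q 2 \<le> 1 - 1 / (2 * W)"
proof -
  have "integral\<^sup>L P (eps_z M p q 2) \<le> (\<integral>x. 1 - 1 / (2 * W) \<partial>P)"
    using AE_P_supp eps_z_2_le by (intro integral_mono_AE integrable_eps_z) (auto elim: eventually_mono)
  then show ?thesis
    using P.prob_space by (simp add: eps_N_eq_integral)
qed

definition weight_share :: "nat \<Rightarrow> (nat \<Rightarrow> 'a) \<Rightarrow> real" where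
  "weight_share K z = indicator S (z 1) * (w (z 1) / (\<Sum>i\<in>{1..K}. w (z i)))"

definition mixed_share :: "real \<Rightarrow> nat \<Rightarrow> (nat \<Rightarrow> 'a) \<Rightarrow> real" where
  "mixed_share \<beta> N z = \<beta> * weight_share N z + (1 - \<beta>) * weight_share (N + 1) z"

lemma weight_share_measurable [measurable]:
  assumes "1 \<le> K" "K \<le> L"
  shows "weight_share K \<in> borel_measurable (PiM {1..L} PQ)"
proof -
  have [measurable]: "(\<lambda>z. z 1) \<in> measurable (PiM {1..L} PQ) M"
    using assms by (intro component_measurable) simp
  have [measurable]: "(\<lambda>z. \<Sum>i\<in>{1..K}. w (z i)) \<in> borel_measurable (PiM {1..L} PQ)"
    using assms by (intro borel_measurable_sum) measurable
  show ?thesis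
    unfolding weight_share_def[abs_def] by measurable
qed

lemma weight_share_bounds:
  assumes "1 \<le> K" "K \<le> L" "z \<in> space (PiM {1..L} PQ)"
  shows "0 \<le> weight_share K z" "weight_share K z \<le> 1"
proof -
  have w_z: "0 \<le> w (z i)" if "i \<in> {1..L}" for i
    using assms(3) that by (intro w_nonneg space_PiM_PQ)
  then have "w (z 1) \<le> (\<Sum>i\<in>{1..K}. w (z i))"
    using assms by (intro member_le_sum) auto
  moreover have "0 \<le> w (z 1)"
    using assms by (intro w_z) auto
  ultimately show "0 \<le> weight_share K z" "weight_share K z \<le> 1"
    by (auto simp: weight_share_def indicator_def divide_le_eq_1)
qed

lemma weight_share_antimono:
  assumes "1 \<le> N" "N + 1 \<le> L" "z \<in> space (PiM {1..L} PQ)"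
  shows "weight_share (N + 1) z \<le> weight_share N z"
proof (cases "z 1 \<in> S")
  case True
  have w_z: "0 \<le> w (z i)" if "i \<in> {1..L}" for i
    using assms(3) that by (intro w_nonneg space_PiM_PQ)
  have "0 < w (z 1)"
    using True by (simp add: supp_iff_w_pos)
  also have "w (z 1) \<le> (\<Sum>i\<in>{1..N}. w (z i))"
    using assms w_z by (intro member_le_sum) auto
  finally have "0 < (\<Sum>i\<in>{1..N}. w (z i))" .
  moreover have "(\<Sum>i\<in>{1..N}. w (z i)) \<le> (\<Sum>i\<in>{1..N + 1}. w (z i))"
    using assms w_z by (intro sum_mono2) auto
  ultimately show ?thesis
    using \<open>0 < w (z 1)\<close> True by (simp add: weight_share_def divide_left_mono)
qed (simp add: weight_share_def)

lemma mixed_share_bounds: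
  assumes "0 \<le> \<beta>" "\<beta> \<le> 1" "1 \<le> N" "z \<in> space (PiM {1..N + 1} PQ)"
  shows "0 \<le> mixed_share \<beta> N z" "mixed_share \<beta> N z \<le> weight_share N z"
proof -
  have "0 \<le> weight_share (N + 1) z" "weight_share (N + 1) z \<le> weight_share N z"
    using assms weight_share_bounds[of "N + 1" "N + 1"] weight_share_antimono[of N "N + 1"] by auto
  with assms(1,2) show "0 \<le> mixed_share \<beta> N z" "mixed_share \<beta> N z \<le> weight_share N z"
    unfolding mixed_share_def by (auto intro: convex_bound_le)
qed

lemma integrable_weight_share:
  assumes "1 \<le> K" "K \<le> L"
  shows "integrable (PiM {1..L} PQ) (weight_share K)"
proof -
  interpret L: prob_space "PiM {1..L} PQ"
    by (rule prob_space_PiM_PQ)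
  show ?thesis
    using weight_share_bounds[OF assms] weight_share_measurable[OF assms]
    by (intro L.integrable_bounded) auto
qed

lemma integral_weight_share:
  assumes "1 \<le> K" "K \<le> L"
  shows "integral\<^sup>L (PiM {1..L} PQ) (weight_share K) = eps_N M p q K"
proof -
  interpret PQ: product_prob_space PQ "{}"
    by (rule product_prob_space_PQ)
  have K: "{1..K} = insert 1 {2..K}" "1 \<notin> {2..K}"
    using assms by auto
  have "integral\<^sup>L (PiM {1..L} PQ) (weight_share K) = (\<integral>z. weight_share K (restrict z {1..K}) \<partial>PiM {1..L} PQ)"
    using assms by (intro Bochner_Integration.integral_cong) (auto simp: weight_share_def)
  also have "\<dots> = integral\<^sup>L (PiM {1..K} PQ) (weight_share K)"
    using assms weight_share_measurable[of K K] by (intro PQ.integral_PiM_restrict) auto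
  also have "\<dots> = (\<integral>x. (\<integral>y. weight_share K (y(1 := x)) \<partial>PiM {2..K} PQ) \<partial>P)"
    using integrable_weight_share[of K K] assms unfolding K by (subst PQ.integral_PiM_insert) simp_all
  also have "\<dots> = (\<integral>x. indicator S x * eps_z M p q K x \<partial>P)"
  proof (rule Bochner_Integration.integral_cong[OF refl])
    fix x
    have "weight_share K (y(1 := x)) = indicator S x * (w x / (w x + (\<Sum>i\<in>{2..K}. w (y i))))" for y
      using assms K by (simp add: weight_share_def sum_from_1_split)
    then show "(\<integral>y. weight_share K (y(1 := x)) \<partial>PiM {2..K} PQ) = indicator S x * eps_z M p q K x"
      by (simp add: eps_z_eq del: times_divide_eq_right)
  qed
  also have "\<dots> = eps_N M p q K"
    by (simp add: eps_N_def set_lebesgue_integral_def)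
  finally show ?thesis .
qed

lemma eps_lam_eq_integral:
  assumes "1 \<le> l"
  shows "eps_lam M p q l = integral\<^sup>L (PiM {1..nat \<lfloor>l\<rfloor> + 1} PQ) (mixed_share (beta l) (nat \<lfloor>l\<rfloor>))"
proof -
  define N where "N = nat \<lfloor>l\<rfloor>"
  have "1 \<le> N"
    using assms unfolding N_def by linarith
  then have "integral\<^sup>L (PiM {1..N + 1} PQ) (mixed_share (beta l) N)
      = beta l * eps_N M p q N + (1 - beta l) * eps_N M p q (N + 1)"
    using integrable_weight_share[of N "N + 1"] integrable_weight_share[of "N + 1" "N + 1"]
      integral_weight_share[of N "N + 1"] integral_weight_share[of "N + 1" "N + 1"]
    unfolding mixed_share_def[abs_def] by simp
  then show ?thesis
    by (simp add: eps_lam_def N_def)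
qed

lemma eps_s_eq_integral:
  "eps_s M p q l = (\<integral>z. (mixed_share (beta l) (nat \<lfloor>l\<rfloor>) z)\<^sup>2 \<partial>PiM {1..nat \<lfloor>l\<rfloor> + 1} PQ)"
  unfolding eps_s_def PiM_if_eq_PQ
  by (intro Bochner_Integration.integral_cong) (auto simp: mixed_share_def weight_share_def indicator_def)

lemma eps_lam_square_le_eps_s:
  assumes "1 \<le> l"
  shows "(eps_lam M p q l)\<^sup>2 \<le> eps_s M p q l"
proof -
  define N where "N = nat \<lfloor>l\<rfloor>"
  define X where "X = mixed_share (beta l) N"
  interpret Y: prob_space "PiM {1..N + 1} PQ"
    by (rule prob_space_PiM_PQ)
  have "1 \<le> N"
    using assms unfolding N_def by linarith
  have X_bounds: "\<bar>X z\<bar> \<le> 1" if "z \<in> space (PiM {1..N + 1} PQ)" for z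
    using mixed_share_bounds[of "beta l" N z] weight_share_bounds[of N "N + 1" z] beta_bounds[of l]
      \<open>1 \<le> N\<close> that
    by (simp add: X_def)
  have X_measurable [measurable]: "X \<in> borel_measurable (PiM {1..N + 1} PQ)"
    using \<open>1 \<le> N\<close> unfolding X_def mixed_share_def[abs_def] by measurable
  have "(\<lambda>z. (X z)\<^sup>2) \<in> borel_measurable (PiM {1..N + 1} PQ)"
    by measurable
  then have "integrable (PiM {1..N + 1} PQ) (\<lambda>z. (X z)\<^sup>2)"
    using X_bounds by (intro Y.integrable_bounded[where B=1]) (auto simp: abs_square_le_1)
  moreover have "integrable (PiM {1..N + 1} PQ) X"
    using X_bounds X_measurable by (intro Y.integrable_bounded) auto
  ultimately have "(Y.expectation X)\<^sup>2 \<le> Y.expectation (\<lambda>z. (X z)\<^sup>2)"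
    using Y.variance_eq[of X] Y.variance_positive[of X] by simp
  then show ?thesis
    using assms by (simp add: eps_lam_eq_integral eps_s_eq_integral X_def N_def)
qed

lemma eps_lam_ge_inverse:
  assumes "1 \<le> l"
  shows "1 / l \<le> eps_lam M p q l"
proof -
  define N where "N = nat \<lfloor>l\<rfloor>"
  define \<beta> where "\<beta> = beta l"
  have "1 \<le> N" "l = real N + 1 - \<beta>"
    using assms unfolding N_def \<beta>_def beta_def by linarith+
  have "0 < \<beta>" "\<beta> \<le> 1"
    using beta_bounds by (simp_all add: \<beta>_def)
  have "1 / l \<le> \<beta> / real N + (1 - \<beta>) / (real N + 1)"
    unfolding \<open>l = real N + 1 - \<beta>\<close> using \<open>1 \<le> N\<close> \<open>0 < \<beta>\<close> \<open>\<beta> \<le> 1\<close>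
    by (intro inverse_le_interpolation) auto
  also have "\<dots> \<le> \<beta> * eps_N M p q N + (1 - \<beta>) * eps_N M p q (N + 1)"
  proof (rule add_mono)
    have "\<beta> * (1 / real N) \<le> \<beta> * eps_N M p q N"
      using eps_N_ge_inverse[of N] \<open>1 \<le> N\<close> \<open>0 < \<beta>\<close> by (intro mult_left_mono) auto
    then show "\<beta> / real N \<le> \<beta> * eps_N M p q N"
      by simp
    have "(1 - \<beta>) * (1 / real (N + 1)) \<le> (1 - \<beta>) * eps_N M p q (N + 1)"
      using eps_N_ge_inverse[of "N + 1"] \<open>\<beta> \<le> 1\<close> by (intro mult_left_mono) auto
    then show "(1 - \<beta>) / (real N + 1) \<le> (1 - \<beta>) * eps_N M p q (N + 1)"
      by (simp add: add.commute)
  qed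
  also have "\<dots> = eps_lam M p q l"
    by (simp add: eps_lam_def N_def \<beta>_def)
  finally show ?thesis .
qed

(* Hoeffding bound for the bad event plus the squared bound on the share of z_1 off that event. *)
definition tail_bound :: "real \<Rightarrow> real" where
  "tail_bound n = exp (- (n - 1) / (2 * W\<^sup>2)) + (2 * W / (n - 1))\<^sup>2"

lemma prob_sum_w_le_half:
  assumes "2 \<le> N" "N \<le> L"
  shows "measure (PiM {1..L} PQ) {z \<in> space (PiM {1..L} PQ). (\<Sum>i\<in>{2..N}. w (z i)) \<le> (real N - 1) / 2}
    \<le> exp (- (real N - 1) / (2 * W\<^sup>2))"
proof -
  interpret PQ: product_prob_space PQ "{}"
    by (rule product_prob_space_PQ)
  have "0 < W"
    using W_ge_1 by simp
  have card: "real (card {2..N}) = real N - 1"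
    using assms by simp
  have "(\<Sum>i\<in>{2..N}. integral\<^sup>L (PQ i) w) = (\<Sum>i\<in>{2..N}. 1)"
    by (intro sum.cong refl) (simp add: integral_w_Q)
  then have mean: "(\<Sum>i\<in>{2..N}. integral\<^sup>L (PQ i) w) = real N - 1"
    using card by simp
  have Hoeffding: "measure (PiM {1..L} PQ) {z \<in> space (PiM {1..L} PQ).
      (\<Sum>i\<in>{2..N}. w (z i)) \<le> (\<Sum>i\<in>{2..N}. integral\<^sup>L (PQ i) w) - (real N - 1) / 2}
    \<le> exp (-2 * ((real N - 1) / 2)\<^sup>2 / (card {2..N} * (W - 0)\<^sup>2))"
    using assms \<open>0 < W\<close> w_nonneg w_le_W
    by (intro PQ.Hoeffding_ineq_le_PiM) auto
  have threshold: "(\<Sum>i\<in>{2..N}. integral\<^sup>L (PQ i) w) - (real N - 1) / 2 = (real N - 1) / 2"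
    unfolding mean by (simp add: field_simps)
  have exponent: "-2 * ((real N - 1) / 2)\<^sup>2 / (card {2..N} * (W - 0)\<^sup>2) = - (real N - 1) / (2 * W\<^sup>2)"
    using assms \<open>0 < W\<close> card by (simp add: power2_eq_square field_simps)
  from Hoeffding show ?thesis
    unfolding threshold exponent .
qed

lemma integral_le_tail_bound:
  fixes f :: "(nat \<Rightarrow> 'a) \<Rightarrow> real"
  assumes "2 \<le> N"
    and le_1: "\<And>z. z \<in> space (PiM {1..N + 1} PQ) \<Longrightarrow> f z \<le> 1"
    and small: "\<And>z. z \<in> space (PiM {1..N + 1} PQ) \<Longrightarrow> (real N - 1) / 2 < (\<Sum>i\<in>{2..N}. w (z i))
      \<Longrightarrow> f z \<le> (2 * W / (real N - 1))\<^sup>2"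
  shows "integral\<^sup>L (PiM {1..N + 1} PQ) f \<le> tail_bound N"
proof -
  interpret Y: prob_space "PiM {1..N + 1} PQ"
    by (rule prob_space_PiM_PQ)
  define E where "E = {z \<in> space (PiM {1..N + 1} PQ). (\<Sum>i\<in>{2..N}. w (z i)) \<le> (real N - 1) / 2}"
  have [measurable]: "(\<lambda>z. \<Sum>i\<in>{2..N}. w (z i)) \<in> borel_measurable (PiM {1..N + 1} PQ)"
    by (intro borel_measurable_sum) measurable
  have "E \<in> Y.events"
    unfolding E_def by measurable
  moreover have "f z \<le> indicator E z + (2 * W / (real N - 1))\<^sup>2" if "z \<in> space (PiM {1..N + 1} PQ)" for z
  proof (cases "z \<in> E")
    case True
    have "f z \<le> 1"
      using that by (rule le_1)
    also have "1 \<le> indicator E z + (2 * W / (real N - 1))\<^sup>2"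
      using True by simp
    finally show ?thesis .
  next
    case False
    then show ?thesis
      using that small by (simp add: E_def)
  qed
  ultimately have "integral\<^sup>L (PiM {1..N + 1} PQ) f \<le> Y.prob E + (2 * W / (real N - 1))\<^sup>2"
    by (intro Y.expectation_le_prob_add) auto
  also have "Y.prob E \<le> exp (- (real N - 1) / (2 * W\<^sup>2))"
    unfolding E_def using assms by (intro prob_sum_w_le_half) auto
  finally show ?thesis
    by (simp add: tail_bound_def)
qed

lemma weight_share_le_if_large_sum:
  assumes "2 \<le> N" "N + 1 \<le> L" "z \<in> space (PiM {1..L} PQ)"
    and large: "(real N - 1) / 2 < (\<Sum>i\<in>{2..N}. w (z i))"
  shows "weight_share N z \<le> 2 * W / (real N - 1)"
    and "weight_share N z - weight_share (N + 1) z \<le> (2 * W / (real N - 1))\<^sup>2"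
proof -
  define R where "R = (\<Sum>i\<in>{2..N}. w (z i))"
  have z: "z i \<in> space M" if "i \<in> {1..L}" for i
    using assms(3) that by (rule space_PiM_PQ)
  have "0 < real N - 1" "0 < R"
    using assms large by (auto simp: R_def)
  have "W / R \<le> W / ((real N - 1) / 2)"
    using W_ge_1 \<open>0 < real N - 1\<close> large unfolding R_def by (intro divide_left_mono) auto
  then have "W / R \<le> 2 * W / (real N - 1)"
    by (simp add: mult.commute)
  have "weight_share N z \<le> 2 * W / (real N - 1) \<and>
      weight_share N z - weight_share (N + 1) z \<le> (2 * W / (real N - 1))\<^sup>2"
  proof (cases "z 1 \<in> S")
    case True
    define a t where "a = w (z 1)" and "t = w (z (N + 1))"
    have a: "0 \<le> a" "a \<le> W" and t: "0 \<le> t" "t \<le> W"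
      using assms w_nonneg w_le_W z by (auto simp: a_def t_def)
    have sums: "(\<Sum>i\<in>{1..N}. w (z i)) = a + R" "(\<Sum>i\<in>{1..N + 1}. w (z i)) = a + R + t"
      using assms sum_from_1_split[of N "\<lambda>i. w (z i)"] by (simp_all add: a_def t_def R_def)
    have "a / (a + R) \<le> W / R"
      using a \<open>0 < R\<close> by (rule frac_add_le)
    moreover have "a / (a + R) - a / (a + R + t) \<le> (W / R)\<^sup>2"
      using a \<open>0 < R\<close> t by (rule frac_add_diff_le)
    moreover have "(W / R)\<^sup>2 \<le> (2 * W / (real N - 1))\<^sup>2"
      using \<open>W / R \<le> 2 * W / (real N - 1)\<close> W_ge_1 \<open>0 < R\<close> by (intro power_mono) auto
    moreover have "weight_share N z = a / (a + R)" "weight_share (N + 1) z = a / (a + R + t)"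
      using True unfolding weight_share_def sums a_def by simp_all
    ultimately show ?thesis
      using \<open>W / R \<le> 2 * W / (real N - 1)\<close> by simp
  next
    case False
    then show ?thesis
      using \<open>0 < real N - 1\<close> W_ge_1 by (simp add: weight_share_def)
  qed
  then show "weight_share N z \<le> 2 * W / (real N - 1)"
    and "weight_share N z - weight_share (N + 1) z \<le> (2 * W / (real N - 1))\<^sup>2"
    by auto
qed

lemma eps_N_diff_le_tail_bound:
  assumes "2 \<le> N"
  shows "eps_N M p q N - eps_N M p q (N + 1) \<le> tail_bound N"
proof -
  have "eps_N M p q N - eps_N M p q (N + 1)
      = (\<integral>z. weight_share N z - weight_share (N + 1) z \<partial>PiM {1..N + 1} PQ)"
    using assms integral_weight_share[of N "N + 1"] integral_weight_share[of "N + 1" "N + 1"]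
      integrable_weight_share[of N "N + 1"] integrable_weight_share[of "N + 1" "N + 1"]
    by simp
  also have "\<dots> \<le> tail_bound N"
  proof (rule integral_le_tail_bound[OF assms])
    fix z assume z: "z \<in> space (PiM {1..N + 1} PQ)"
    show "weight_share N z - weight_share (N + 1) z \<le> 1"
      using assms weight_share_bounds[of N "N + 1" z] weight_share_bounds[of "N + 1" "N + 1" z] z by simp
    show "weight_share N z - weight_share (N + 1) z \<le> (2 * W / (real N - 1))\<^sup>2"
      if "(real N - 1) / 2 < (\<Sum>i\<in>{2..N}. w (z i))"
      using assms z that by (intro weight_share_le_if_large_sum) auto
  qed
  finally show ?thesis .
qed

lemma eps_s_le_tail_bound:
  assumes "2 \<le> l"
  shows "eps_s M p q l \<le> tail_bound (nat \<lfloor>l\<rfloor>)"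
proof -
  define N where "N = nat \<lfloor>l\<rfloor>"
  have "2 \<le> N"
    using assms unfolding N_def by linarith
  have bounds: "0 \<le> mixed_share (beta l) N z" "mixed_share (beta l) N z \<le> weight_share N z"
    "weight_share N z \<le> 1" if "z \<in> space (PiM {1..N + 1} PQ)" for z
    using mixed_share_bounds[of "beta l" N z] weight_share_bounds[of N "N + 1" z] beta_bounds[of l]
      \<open>2 \<le> N\<close> that by auto
  then have sq_le: "(mixed_share (beta l) N z)\<^sup>2 \<le> (weight_share N z)\<^sup>2"
    if "z \<in> space (PiM {1..N + 1} PQ)" for z
    using that by (intro power_mono) auto
  have "eps_s M p q l = (\<integral>z. (mixed_share (beta l) N z)\<^sup>2 \<partial>PiM {1..N + 1} PQ)"
    by (simp add: eps_s_eq_integral N_def)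
  also have "\<dots> \<le> tail_bound N"
  proof (rule integral_le_tail_bound[OF \<open>2 \<le> N\<close>])
    fix z assume z: "z \<in> space (PiM {1..N + 1} PQ)"
    show "(mixed_share (beta l) N z)\<^sup>2 \<le> 1"
      using sq_le[OF z] bounds[OF z] by (simp add: power_le_one order_trans)
    show "(mixed_share (beta l) N z)\<^sup>2 \<le> (2 * W / (real N - 1))\<^sup>2"
      if "(real N - 1) / 2 < (\<Sum>i\<in>{2..N}. w (z i))"
    proof -
      have "weight_share N z \<le> 2 * W / (real N - 1)"
        using \<open>2 \<le> N\<close> z that by (intro weight_share_le_if_large_sum) auto
      then have "(weight_share N z)\<^sup>2 \<le> (2 * W / (real N - 1))\<^sup>2"
        using bounds[OF z] by (intro power_mono) auto
      then show ?thesis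
        using sq_le[OF z] by linarith
    qed
  qed
  finally show ?thesis
    by (simp add: N_def)
qed

lemma powi_minus_2_le_eps_lam_square:
  assumes "1 \<le> l"
  shows "l powi (-2) \<le> (eps_lam M p q l)\<^sup>2"
proof -
  have "l powi (-2) = (1 / l)\<^sup>2"
    by (simp add: power_int_minus power_divide inverse_eq_divide)
  also have "\<dots> \<le> (eps_lam M p q l)\<^sup>2"
    using assms eps_lam_ge_inverse[OF assms] by (intro power_mono) auto
  finally show ?thesis .
qed

lemma eps_deriv_le_near_1:
  assumes "1 \<le> l" "l < 2"
  shows "eps_deriv M p q l \<le> - 1 / (2 * W)"
proof -
  have "nat \<lfloor>l\<rfloor> = 1"
    using assms by linarith
  then show ?thesis
    using eps_N_1 eps_N_2_le by (simp add: eps_deriv_def numeral_2_eq_2)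
qed

lemma tail_bound_nonneg: "0 \<le> tail_bound n"
  by (simp add: tail_bound_def)

lemma eventually_h3_ge_at_top:
  assumes "0 \<le> a" "0 < b"
  shows "eventually (\<lambda>l. b / 2 \<le> b * (1 - eps_s M p q l) + 2 * (a + b * l) * eps_deriv M p q l) at_top"
proof -
  define g where "g x = (b + 2 * a + 2 * b * (x + 1)) * tail_bound x" for x
  have "0 < W"
    using W_ge_1 by simp
  then have "(g \<longlongrightarrow> 0) at_top"
    unfolding g_def tail_bound_def by (rule tendsto_affine_times_tail)
  then have "eventually (\<lambda>x. g x < b / 2) at_top"
    using assms by (intro order_tendstoD) auto
  moreover have "filterlim (\<lambda>l. real (nat \<lfloor>l\<rfloor>)) at_top at_top"
    by (intro filterlim_compose[OF filterlim_real_sequentially]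
        filterlim_compose[OF filterlim_nat_sequentially] filterlim_floor_sequentially)
  ultimately have "eventually (\<lambda>l. g (real (nat \<lfloor>l\<rfloor>)) < b / 2) at_top"
    by (rule eventually_compose_filterlim)
  with eventually_ge_at_top[of "2::real"] show ?thesis
  proof eventually_elim
    case (elim l)
    define N where "N = nat \<lfloor>l\<rfloor>"
    define D where "D = tail_bound N"
    have "2 \<le> N" "l \<le> real N + 1"
      using elim unfolding N_def by linarith+
    have "eps_s M p q l \<le> D"
      using eps_s_le_tail_bound elim by (simp add: D_def N_def)
    then have "b * (1 - D) \<le> b * (1 - eps_s M p q l)"
      using assms by (intro mult_left_mono) auto
    moreover have "(a + b * l) * (- D) \<le> (a + b * l) * eps_deriv M p q l"
      using eps_N_diff_le_tail_bound[OF \<open>2 \<le> N\<close>] assms elim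
      by (intro mult_left_mono) (auto simp: eps_deriv_def D_def N_def)
    moreover have "(a + b * l) * D \<le> (a + b * (real N + 1)) * D"
      using assms \<open>l \<le> real N + 1\<close> by (intro mult_right_mono) (auto simp: D_def tail_bound_nonneg)
    ultimately have "b - (b + 2 * a + 2 * b * (real N + 1)) * D
        \<le> b * (1 - eps_s M p q l) + 2 * (a + b * l) * eps_deriv M p q l"
      by (simp add: algebra_simps)
    moreover have "(b + 2 * a + 2 * b * (real N + 1)) * D < b / 2"
      using elim by (simp add: g_def D_def N_def)
    ultimately show ?case
      by linarith
  qed
qed

lemma eventually_h1_le_at_right_1:
  assumes "0 \<le> a" "0 < b"
  shows "eventually (\<lambda>l. b * (1 - l powi (-2)) + 2 * (a + b * l) * eps_deriv M p q l \<le> - b / (2 * W))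
    (at_right 1)"
proof -
  have "0 < W"
    using W_ge_1 by simp
  have "((\<lambda>l::real. b * (1 - l powi (-2))) \<longlongrightarrow> b * (1 - 1 powi (-2))) (at_right 1)"
    by (intro tendsto_intros) auto
  then have "eventually (\<lambda>l. b * (1 - l powi (-2)) < b / (2 * W)) (at_right 1)"
    using assms \<open>0 < W\<close> by (intro order_tendstoD) auto
  moreover have "eventually (\<lambda>l. 1 < l \<and> l < (2::real)) (at_right 1)"
    by (simp add: eventually_at_right_field) (auto intro: exI[of _ 2])
  ultimately show ?thesis
  proof eventually_elim
    case (elim l)
    have "(a + b * l) * eps_deriv M p q l \<le> (a + b * l) * (- 1 / (2 * W))"
      using assms elim eps_deriv_le_near_1[of l] by (intro mult_left_mono) auto
    also have "\<dots> \<le> b * (- 1 / (2 * W))"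
    proof (rule mult_right_mono_neg)
      have "b \<le> b * l"
        using assms elim by (simp add: mult_le_cancel_left1)
      with assms show "b \<le> a + b * l"
        by linarith
      show "- 1 / (2 * W) \<le> 0"
        using \<open>0 < W\<close> by simp
    qed
    finally have "2 * (a + b * l) * eps_deriv M p q l \<le> - b / W"
      by (simp add: field_simps)
    moreover have "- b / W + b / (2 * W) = - b / (2 * W)"
      using \<open>0 < W\<close> by (simp add: field_simps)
    ultimately show ?case
      using elim by linarith
  qed
qed

end

theorem proposition5p2:
  fixes M :: "'a measure" and p q :: "'a \<Rightarrow> real" and a b :: real
    and h1 h2 h3 :: "real \<Rightarrow> real"
  assumes "sigma_finite_measure M"
    and "p \<in> borel_measurable M" and "q \<in> borel_measurable M"
    and "\<And>x. x \<in> space M \<Longrightarrow> p x \<ge> 0" and "\<And>x. x \<in> space M \<Longrightarrow> q x \<ge> 0"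
    and "(\<integral>\<^sup>+ x. ennreal (p x) \<partial>M) = 1" and "(\<integral>\<^sup>+ x. ennreal (q x) \<partial>M) = 1"
    and "\<And>x. x \<in> space M \<Longrightarrow> p x > 0 \<Longrightarrow> q x > 0"
    and "bdd_above (wgt p q ` space M)"
    and "a \<ge> 0" and "b > 0"
    and "h1 = (\<lambda>l. b * (1 - l powi (-2)) + 2 * (a + b * l) * eps_deriv M p q l)"
    and "h2 = (\<lambda>l. b * (1 - (eps_lam M p q l)\<^sup>2) + 2 * (a + b * l) * eps_deriv M p q l)"
    and "h3 = (\<lambda>l. b * (1 - eps_s M p q l) + 2 * (a + b * l) * eps_deriv M p q l)"
  shows "(\<forall>l\<ge>1. h3 l \<le> h2 l \<and> h2 l \<le> h1 l)
    \<and> (\<forall>h\<in>{h1, h2, h3}.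
         Liminf at_top (\<lambda>l. ereal (h l)) > 0 \<and> Limsup (at_right 1) (\<lambda>l. ereal (h l)) < 0)"
proof -
  interpret importance_sampling M p q
    by unfold_locales (use assms in auto)
  note h_defs = assms(12-14) and ab = assms(10,11)
  have order: "h3 l \<le> h2 l \<and> h2 l \<le> h1 l" if "1 \<le> l" for l
    using eps_lam_square_le_eps_s[OF that] powi_minus_2_le_eps_lam_square[OF that] ab
    unfolding h_defs by (auto intro: mult_left_mono)
  have h3_large: "eventually (\<lambda>l. b / 2 \<le> h3 l) at_top"
    using eventually_h3_ge_at_top[OF ab] unfolding h_defs(3) .
  have h1_near_1: "eventually (\<lambda>l. h1 l \<le> - b / (2 * W)) (at_right 1)"
    using eventually_h1_le_at_right_1[OF ab] unfolding h_defs(1) .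
  have large: "eventually (\<lambda>l. b / 2 \<le> h l) at_top" if "h \<in> {h1, h2, h3}" for h
    using h3_large eventually_ge_at_top[of "1::real"]
  proof eventually_elim
    case (elim l)
    with that order[of l] show ?case
      by auto
  qed
  have near_1: "eventually (\<lambda>l. h l \<le> - b / (2 * W)) (at_right 1)" if "h \<in> {h1, h2, h3}" for h
    using h1_near_1 eventually_at_right_less[of "1::real"]
  proof eventually_elim
    case (elim l)
    with that order[of l] show ?case
      by auto
  qed
  have "0 < b / 2" "- b / (2 * W) < 0"
    using ab W_ge_1 by auto
  then show ?thesis
    using order Liminf_pos_if_eventually_ge[OF _ large] Limsup_neg_if_eventually_le[OF _ near_1] by blast
qed

end
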